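(* Let $P$ be an algebraic $L$-dcpo. Then $\Sigma_LP=(P,\sigma_L(P))$ is a strong locally super-compact $L$-topological space.
   Context: $L$ is a frame with implication $\to$. $L$-subsets: maps to $L$; nonempty: $\bigvee A=1$; ${\rm sub}_X(A,B)=\bigwedge_xA(x)\to B(x)$. $L$-topology: $\mathcal O(X)\subseteq L^X$ closed under finite meets and arbitrary joins containing constants. Base: $\mathcal B\subseteq\mathcal O(X)$ with $A=\bigvee_{B\in\mathcal B}{\rm sub}_X(B,A)\wedge B$ for each open $A$. Super-compact: nonempty $A$ with ${\rm sub}_X(A,\bigvee_iV_i)=\bigvee_i{\rm sub}_X(A,V_i)$ for all families of open $V_i$. Strong locally super-compact: has a base of super-compact open sets. $L$-order $e$ on $P$: $e(x,x)=1$, $e(x,y)\wedge e(y,z)\le e(x,z)$, $e(x,y)\wedge e(y,x)=1\Rightarrow x=y$. ${\downarrow}y(x)=e(x,y)$; $\sqcup A=x$ iff $e(x,y)={\rm sub}_P(A,{\downarrow}y)$ for all $y$; directed: nonempty with $D(x)\wedge D(y)\le\bigvee_zD(z)\wedge e(x,z)\wedge e(y,z)$; ideal: directed lower set; $L$-dcpo: every directed $L$-subset has a supremum. ${\Downarrow}x(y)=\bigwedge\{e(x,\sqcup I)\to I(y):I\text{ ideal with a supremum}\}$. Compact: ${\Downarrow}x(x)=1$; $K(P)$ the set of compact elements; $k(x)(y)=e(y,x)$ if $y\in K(P)$, else $0$; algebraic $L$-dcpo: $L$-dcpo with every $k(x)$ directed and $\sqcup k(x)=x$. $\sigma_L(P)$: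 upper sets $A$ ($A(x)\wedge e(x,y)\le A(y)$) with $A(\sqcup D)=\bigvee_xA(x)\wedge D(x)$ for every directed $D$. *)

theory Defs
  imports Main
begin

definition frame_law :: "'l::complete_lattice itself \<Rightarrow> bool" where
  "frame_law _ \<longleftrightarrow> (\<forall>(a::'l) S. inf a (Sup S) = Sup ((\<lambda>s. inf a s) ` S))"

text \<open>Heyting implication (right adjoint of meet).\<close>
definition limp :: "'l::complete_lattice \<Rightarrow> 'l \<Rightarrow> 'l" where
  "limp a b = Sup {c. inf c a \<le> b}"

definition lsub :: "('a \<Rightarrow> 'l::complete_lattice) \<Rightarrow> ('a \<Rightarrow> 'l) \<Rightarrow> 'l" where
  "lsub A B = (INF x. limp (A x) (B x))"

definition lnonempty :: "('a \<Rightarrow> 'l::complete_lattice) \<Rightarrow> bool" where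
  "lnonempty A \<longleftrightarrow> (SUP x. A x) = top"

definition is_L_topology :: "('a \<Rightarrow> 'l::complete_lattice) set \<Rightarrow> bool" where
  "is_L_topology T \<longleftrightarrow>
     (\<forall>A\<in>T. \<forall>B\<in>T. inf A B \<in> T) \<and>
     (\<forall>S. S \<subseteq> T \<longrightarrow> Sup S \<in> T) \<and>
     (\<forall>c. (\<lambda>_. c) \<in> T)"

definition is_L_base :: "('a \<Rightarrow> 'l::complete_lattice) set \<Rightarrow> ('a \<Rightarrow> 'l) set \<Rightarrow> bool" where
  "is_L_base T B \<longleftrightarrow> B \<subseteq> T \<and>
     (\<forall>A\<in>T. A = (SUP V\<in>B. (\<lambda>x. inf (lsub V A) (V x))))"

definition super_compact :: "('a \<Rightarrow> 'l::complete_lattice) set \<Rightarrow> ('a \<Rightarrow> 'l) \<Rightarrow> bool" where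
  "super_compact T A \<longleftrightarrow> lnonempty A \<and>
     (\<forall>(I::('a \<Rightarrow> 'l) set). I \<subseteq> T \<longrightarrow> lsub A (Sup I) = (SUP V\<in>I. lsub A V))"

definition strong_locally_super_compact :: "('a \<Rightarrow> 'l::complete_lattice) set \<Rightarrow> bool" where
  "strong_locally_super_compact T \<longleftrightarrow>
     (\<exists>B. is_L_base T B \<and> (\<forall>V\<in>B. super_compact T V))"

definition L_order :: "('a \<Rightarrow> 'a \<Rightarrow> 'l::complete_lattice) \<Rightarrow> bool" where
  "L_order e \<longleftrightarrow> (\<forall>x. e x x = top) \<and> (\<forall>x y z. inf (e x y) (e y z) \<le> e x z) \<and>
     (\<forall>x y. inf (e x y) (e y x) = top \<longrightarrow> x = y)"

definition ldown :: "('a \<Rightarrow> 'a \<Rightarrow> 'l::complete_lattice) \<Rightarrow> 'a \<Rightarrow> 'a \<Rightarrow> 'l" where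
  "ldown e y = (\<lambda>x. e x y)"

definition is_lsup :: "('a \<Rightarrow> 'a \<Rightarrow> 'l::complete_lattice) \<Rightarrow> ('a \<Rightarrow> 'l) \<Rightarrow> 'a \<Rightarrow> bool" where
  "is_lsup e A x \<longleftrightarrow> (\<forall>y. e x y = lsub A (ldown e y))"

definition lsup :: "('a \<Rightarrow> 'a \<Rightarrow> 'l::complete_lattice) \<Rightarrow> ('a \<Rightarrow> 'l) \<Rightarrow> 'a" where
  "lsup e A = (THE x. is_lsup e A x)"

definition ldirected :: "('a \<Rightarrow> 'a \<Rightarrow> 'l::complete_lattice) \<Rightarrow> ('a \<Rightarrow> 'l) \<Rightarrow> bool" where
  "ldirected e D \<longleftrightarrow> lnonempty D \<and>
     (\<forall>x y. inf (D x) (D y) \<le> (SUP z. inf (inf (D z) (e x z)) (e y z)))"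

definition llower :: "('a \<Rightarrow> 'a \<Rightarrow> 'l::complete_lattice) \<Rightarrow> ('a \<Rightarrow> 'l) \<Rightarrow> bool" where
  "llower e A \<longleftrightarrow> (\<forall>x y. inf (A x) (e y x) \<le> A y)"

definition lideal :: "('a \<Rightarrow> 'a \<Rightarrow> 'l::complete_lattice) \<Rightarrow> ('a \<Rightarrow> 'l) \<Rightarrow> bool" where
  "lideal e I \<longleftrightarrow> ldirected e I \<and> llower e I"

definition L_dcpo :: "('a \<Rightarrow> 'a \<Rightarrow> 'l::complete_lattice) \<Rightarrow> bool" where
  "L_dcpo e \<longleftrightarrow> L_order e \<and> (\<forall>D. ldirected e D \<longrightarrow> (\<exists>x. is_lsup e D x))"

definition way_below :: "('a \<Rightarrow> 'a \<Rightarrow> 'l::complete_lattice) \<Rightarrow> 'a \<Rightarrow> 'a \<Rightarrow> 'l" where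
  "way_below e x y = Inf {limp (e x (lsup e I)) (I y) | I. lideal e I \<and> (\<exists>s. is_lsup e I s)}"

definition lcompact :: "('a \<Rightarrow> 'a \<Rightarrow> 'l::complete_lattice) \<Rightarrow> 'a \<Rightarrow> bool" where
  "lcompact e x \<longleftrightarrow> way_below e x x = top"

definition kset :: "('a \<Rightarrow> 'a \<Rightarrow> 'l::complete_lattice) \<Rightarrow> 'a \<Rightarrow> 'a \<Rightarrow> 'l" where
  "kset e x = (\<lambda>y. if lcompact e y then e y x else bot)"

definition algebraic_L_dcpo :: "('a \<Rightarrow> 'a \<Rightarrow> 'l::complete_lattice) \<Rightarrow> bool" where
  "algebraic_L_dcpo e \<longleftrightarrow> L_dcpo e \<and> (\<forall>x. ldirected e (kset e x) \<and> is_lsup e (kset e x) x)"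

definition sigma_L :: "('a \<Rightarrow> 'a \<Rightarrow> 'l::complete_lattice) \<Rightarrow> ('a \<Rightarrow> 'l) set" where
  "sigma_L e = {A. (\<forall>x y. inf (A x) (e x y) \<le> A y) \<and>
                  (\<forall>D. ldirected e D \<longrightarrow> A (lsup e D) = (SUP x. inf (A x) (D x)))}"

end

(* In sigma_L(P) joins and constants are open by frame distributivity, and binary
   meets are open because directedness lets two approximations of a directed
   supremum be merged into one.  For compact k the principal upper set e k is
   Scott open: the lower closure of a directed D is an ideal with the same
   supremum s, so compactness of k bounds e k s by the degree to which that ideal
   contains k.  Every principal upper set is super-compact, since
   sub(e k, V) = V k for upper V and evaluation at k preserves joins.  Finally, in
   an algebraic L-dcpo each x is the directed supremum of k(x), so every open A
   satisfies A x = (SUP k compact. inf (A k) (e k x)), which is the base condition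
   for the principal upper sets of compact elements. *)

theory Submission
  imports Defs
begin

definition lupper :: "('a \<Rightarrow> 'a \<Rightarrow> 'l::complete_lattice) \<Rightarrow> ('a \<Rightarrow> 'l) \<Rightarrow> bool" where
  "lupper e A \<longleftrightarrow> (\<forall>x y. inf (A x) (e x y) \<le> A y)"

definition ldown_closure :: "('a \<Rightarrow> 'a \<Rightarrow> 'l::complete_lattice) \<Rightarrow> ('a \<Rightarrow> 'l) \<Rightarrow> 'a \<Rightarrow> 'l" where
  "ldown_closure e D = (\<lambda>y. SUP x. inf (e y x) (D x))"

lemma L_order_refl: "L_order e \<Longrightarrow> e x x = top"
  unfolding L_order_def by blast

lemma L_order_trans: "L_order e \<Longrightarrow> inf (e x y) (e y z) \<le> e x z"
  unfolding L_order_def by blast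

lemma L_order_antisym: "L_order e \<Longrightarrow> inf (e x y) (e y x) = top \<Longrightarrow> x = y"
  unfolding L_order_def by blast

lemma L_dcpo_L_order: "L_dcpo e \<Longrightarrow> L_order e"
  unfolding L_dcpo_def by blast

lemma algebraic_L_dcpo_L_dcpo: "algebraic_L_dcpo e \<Longrightarrow> L_dcpo e"
  unfolding algebraic_L_dcpo_def by blast

lemma lupper_principal: "L_order e \<Longrightarrow> lupper e (e k)"
  unfolding lupper_def by (blast intro: L_order_trans)

lemma llower_principal: "L_order e \<Longrightarrow> llower e (ldown e y)"
  unfolding llower_def ldown_def by (metis L_order_trans inf_commute)

lemma lsup_eqI:
  assumes "L_order e" and "is_lsup e D s"
  shows "lsup e D = s"
  unfolding lsup_def
proof (rule the_equality)
  fix t assume "is_lsup e D t"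
  then have "e s t = e t t" and "e t s = e s s"
    using assms(2) unfolding is_lsup_def by metis+
  then show "t = s" using assms(1) by (metis L_order_antisym L_order_refl inf_top_left)
qed (fact assms(2))

lemma L_dcpo_is_lsup:
  assumes "L_dcpo e" and "ldirected e D"
  shows "is_lsup e D (lsup e D)"
proof -
  obtain s where "is_lsup e D s" using assms unfolding L_dcpo_def by blast
  with lsup_eqI[OF L_dcpo_L_order[OF assms(1)]] show ?thesis by simp
qed

lemma sigma_L_iff:
  "A \<in> sigma_L e \<longleftrightarrow> lupper e A \<and> (\<forall>D. ldirected e D \<longrightarrow> A (lsup e D) = (SUP x. inf (A x) (D x)))"
  unfolding sigma_L_def lupper_def by blast

context
  fixes e :: "'a \<Rightarrow> 'a \<Rightarrow> 'l::complete_lattice"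
  assumes frame: "frame_law TYPE('l)"
begin

lemma frame_inf_SUP_distrib: "inf (a::'l) (SUP i\<in>I. f i) = (SUP i\<in>I. inf a (f i))"
  using frame unfolding frame_law_def by (simp add: image_image)

lemma frame_SUP_inf_distrib: "inf (SUP i\<in>I. f i) (a::'l) = (SUP i\<in>I. inf (f i) a)"
  using frame_inf_SUP_distrib[of a f I] by (simp add: inf_commute)

lemma le_limp_iff: "(c::'l) \<le> limp a b \<longleftrightarrow> inf c a \<le> b"
proof
  have "inf (limp a b) a = (SUP c\<in>{c. inf c a \<le> b}. inf c a)"
    unfolding limp_def using frame_SUP_inf_distrib[of id _ a] by simp
  also have "\<dots> \<le> b" by (rule SUP_least) auto
  finally show "c \<le> limp a b \<Longrightarrow> inf c a \<le> b" by (meson inf_mono order_refl order_trans)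
qed (auto simp: limp_def intro: Sup_upper)

lemma le_lsub_iff: "(c::'l) \<le> lsub A B \<longleftrightarrow> (\<forall>x. inf c (A x) \<le> B x)"
  unfolding lsub_def by (simp add: le_INF_iff le_limp_iff)

lemma lsub_inf_le: "inf (lsub A B) (A x) \<le> (B x::'l)"
  using le_lsub_iff[of "lsub A B" A B] by simp

lemma is_lsup_upper:
  assumes "L_order e" and "is_lsup e D s"
  shows "D x \<le> e x s"
  using assms lsub_inf_le[of D "ldown e s" x] unfolding is_lsup_def ldown_def
  by (metis L_order_refl inf_top_left)

lemma lcompact_le_ideal:
  assumes "L_order e" and "lcompact e k" and "lideal e I" and "is_lsup e I s"
  shows "e k s \<le> I k"
proof -
  have "way_below e k k \<le> limp (e k s) (I k)"
    unfolding way_below_def using assms(3,4) lsup_eqI[OF assms(1,4)]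
    by (intro Inf_lower) blast
  then show ?thesis
    using assms(2) unfolding lcompact_def by (simp add: le_limp_iff)
qed

lemma lsub_principal:
  assumes "L_order e" and "lupper e V"
  shows "lsub (e k) V = V k"
proof (rule antisym)
  show "lsub (e k) V \<le> V k"
    using lsub_inf_le[of "e k" V k] by (simp add: L_order_refl[OF assms(1)])
  show "V k \<le> lsub (e k) V"
    using assms(2) unfolding le_lsub_iff lupper_def by blast
qed

lemma SUP_inf_ldirected:
  assumes D: "ldirected e D" and f: "lupper e f" and g: "lupper e g"
  shows "inf (SUP x. inf (f x) (D x)) (SUP y. inf (g y) (D y)) = (SUP z. inf (inf (f z) (g z)) (D z))"
proof (rule antisym)
  have "inf (inf (f x) (D x)) (inf (g y) (D y)) \<le> (SUP z. inf (inf (f z) (g z)) (D z))" for x y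
  proof -
    let ?t = "inf (f x) (g y)"
    have "inf (inf (f x) (D x)) (inf (g y) (D y)) \<le> inf ?t (inf (D x) (D y))"
      by (simp add: inf_aci inf_mono)
    also have "\<dots> \<le> inf ?t (SUP z. inf (inf (D z) (e x z)) (e y z))"
      using D unfolding ldirected_def by (blast intro: inf_mono)
    also have "\<dots> = (SUP z. inf ?t (inf (inf (D z) (e x z)) (e y z)))"
      by (rule frame_inf_SUP_distrib)
    also have "\<dots> \<le> (SUP z. inf (inf (f z) (g z)) (D z))"
    proof (rule SUP_mono')
      fix z
      have "inf ?t (inf (inf (D z) (e x z)) (e y z)) \<le> inf (inf (inf (f x) (e x z)) (inf (g y) (e y z))) (D z)"
        by (simp add: inf_aci inf_mono)
      also have "\<dots> \<le> inf (inf (f z) (g z)) (D z)"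
        using f g unfolding lupper_def by (blast intro: inf_mono)
      finally show "inf ?t (inf (inf (D z) (e x z)) (e y z)) \<le> inf (inf (f z) (g z)) (D z)" .
    qed
    finally show ?thesis .
  qed
  then show "inf (SUP x. inf (f x) (D x)) (SUP y. inf (g y) (D y)) \<le> (SUP z. inf (inf (f z) (g z)) (D z))"
    by (simp add: frame_SUP_inf_distrib frame_inf_SUP_distrib SUP_least)
  show "(SUP z. inf (inf (f z) (g z)) (D z)) \<le> inf (SUP x. inf (f x) (D x)) (SUP y. inf (g y) (D y))"
    by (intro le_infI SUP_mono' inf_mono) simp_all
qed

lemma const_in_sigma_L: "(\<lambda>_. c::'l) \<in> sigma_L e"
  unfolding sigma_L_def ldirected_def lnonempty_def
  by (auto simp flip: frame_inf_SUP_distrib)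

lemma Sup_in_sigma_L:
  assumes S: "S \<subseteq> sigma_L e"
  shows "Sup S \<in> sigma_L e"
  unfolding sigma_L_iff lupper_def
proof (intro conjI allI impI)
  fix x y
  have "inf (Sup S x) (e x y) = (SUP A\<in>S. inf (A x) (e x y))"
    by (simp add: frame_SUP_inf_distrib)
  also have "\<dots> \<le> (SUP A\<in>S. A y)"
  proof (rule SUP_subset_mono[OF order_refl])
    fix A assume "A \<in> S"
    with S have "lupper e A" by (auto simp: sigma_L_iff)
    then show "inf (A x) (e x y) \<le> A y" unfolding lupper_def by blast
  qed
  finally show "inf (Sup S x) (e x y) \<le> Sup S y" by simp
next
  fix D assume "ldirected e D"
  then have "Sup S (lsup e D) = (SUP A\<in>S. SUP x. inf (A x) (D x))"
    using S unfolding Sup_apply by (intro SUP_cong) (auto simp: sigma_L_iff)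
  also have "\<dots> = (SUP x. inf (Sup S x) (D x))"
    by (simp add: frame_SUP_inf_distrib SUP_commute[of _ S])
  finally show "Sup S (lsup e D) = (SUP x. inf (Sup S x) (D x))" .
qed

lemma inf_in_sigma_L:
  assumes A: "A \<in> sigma_L e" and B: "B \<in> sigma_L e"
  shows "inf A B \<in> sigma_L e"
  unfolding sigma_L_iff
proof (intro conjI allI impI)
  show "lupper e (inf A B)"
    using A B unfolding sigma_L_iff lupper_def
    by (auto intro: le_infI1 le_infI2 order_trans[OF inf_mono[OF inf_le1 order_refl]]
        order_trans[OF inf_mono[OF inf_le2 order_refl]])
  fix D assume "ldirected e D"
  then show "inf A B (lsup e D) = (SUP x. inf (inf A B x) (D x))"
    using A B SUP_inf_ldirected[of D A B] unfolding sigma_L_iff by simp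
qed

lemma is_L_topology_sigma_L: "is_L_topology (sigma_L e)"
  unfolding is_L_topology_def
  using inf_in_sigma_L Sup_in_sigma_L const_in_sigma_L by blast


lemma le_ldown_closure:
  assumes "L_order e"
  shows "D y \<le> ldown_closure e D y"
  unfolding ldown_closure_def using SUP_upper[of y UNIV "\<lambda>x. inf (e y x) (D x)"]
  by (simp add: L_order_refl[OF assms])

lemma llower_ldown_closure:
  assumes "L_order e"
  shows "llower e (ldown_closure e D)"
  unfolding llower_def
proof (intro allI)
  fix x y
  have "inf (ldown_closure e D x) (e y x) = (SUP a. inf (inf (e x a) (D a)) (e y x))"
    unfolding ldown_closure_def by (rule frame_SUP_inf_distrib)
  also have "\<dots> \<le> ldown_closure e D y"
    unfolding ldown_closure_def
    using L_order_trans[OF assms, of y x] by (intro SUP_mono') (simp add: inf_aci le_infI2 le_infI1)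
  finally show "inf (ldown_closure e D x) (e y x) \<le> ldown_closure e D y" .
qed

lemma ldirected_ldown_closure:
  assumes O: "L_order e" and D: "ldirected e D"
  shows "ldirected e (ldown_closure e D)"
  unfolding ldirected_def lnonempty_def
proof (intro conjI allI)
  have "(SUP x. D x) \<le> (SUP x. ldown_closure e D x)"
    by (intro SUP_mono' le_ldown_closure[OF O])
  then show "(SUP x. ldown_closure e D x) = top"
    using D unfolding ldirected_def lnonempty_def by (simp add: top_unique)
next
  fix x y
  have "inf (ldown_closure e D x) (ldown_closure e D y) = (SUP z. inf (inf (e x z) (e y z)) (D z))"
    unfolding ldown_closure_def
    by (rule SUP_inf_ldirected[OF D lupper_principal[OF O] lupper_principal[OF O]])
  also have "\<dots> \<le> (SUP z. inf (inf (ldown_closure e D z) (e x z)) (e y z))"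
    using le_ldown_closure[OF O] by (intro SUP_mono') (simp add: inf_aci le_infI2 le_infI1)
  finally show "inf (ldown_closure e D x) (ldown_closure e D y)
      \<le> (SUP z. inf (inf (ldown_closure e D z) (e x z)) (e y z))" .
qed

lemma lsub_ldown_closure:
  assumes O: "L_order e" and V: "llower e V"
  shows "lsub (ldown_closure e D) V = lsub D V"
proof (rule antisym)
  show "lsub (ldown_closure e D) V \<le> lsub D V"
    unfolding le_lsub_iff
  proof
    fix x
    have "inf (lsub (ldown_closure e D) V) (D x) \<le> inf (lsub (ldown_closure e D) V) (ldown_closure e D x)"
      using le_ldown_closure[OF O] by (simp add: inf.coboundedI2)
    also have "\<dots> \<le> V x" by (rule lsub_inf_le)
    finally show "inf (lsub (ldown_closure e D) V) (D x) \<le> V x" .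
  qed
  show "lsub D V \<le> lsub (ldown_closure e D) V"
    unfolding le_lsub_iff
  proof
    fix y
    have "inf (lsub D V) (ldown_closure e D y) = (SUP x. inf (e y x) (inf (lsub D V) (D x)))"
      unfolding ldown_closure_def by (simp add: frame_inf_SUP_distrib inf_aci)
    also have "\<dots> \<le> (SUP x. inf (e y x) (V x))"
      using lsub_inf_le[of D V] by (intro SUP_mono' inf_mono) (simp_all add: inf_commute)
    also have "\<dots> \<le> V y"
      using V unfolding llower_def by (simp add: SUP_least inf_commute)
    finally show "inf (lsub D V) (ldown_closure e D y) \<le> V y" .
  qed
qed

lemma lideal_ldown_closure:
  "L_order e \<Longrightarrow> ldirected e D \<Longrightarrow> lideal e (ldown_closure e D)"
  unfolding lideal_def by (simp add: ldirected_ldown_closure llower_ldown_closure)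

lemma is_lsup_ldown_closure:
  "L_order e \<Longrightarrow> is_lsup e D s \<Longrightarrow> is_lsup e (ldown_closure e D) s"
  unfolding is_lsup_def by (simp add: lsub_ldown_closure llower_principal)

lemma principal_compact_in_sigma_L:
  assumes P: "L_dcpo e" and k: "lcompact e k"
  shows "e k \<in> sigma_L e"
  unfolding sigma_L_iff
proof (intro conjI allI impI)
  have O: "L_order e" using P by (rule L_dcpo_L_order)
  show "lupper e (e k)" using O by (rule lupper_principal)
  fix D assume D: "ldirected e D"
  define s where "s = lsup e D"
  have s: "is_lsup e D s" unfolding s_def using P D by (rule L_dcpo_is_lsup)
  show "e k (lsup e D) = (SUP x. inf (e k x) (D x))"
    unfolding s_def[symmetric]
  proof (rule antisym)
    have "e k s \<le> ldown_closure e D k"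
      using O k lideal_ldown_closure[OF O D] is_lsup_ldown_closure[OF O s]
      by (rule lcompact_le_ideal)
    then show "e k s \<le> (SUP x. inf (e k x) (D x))" by (simp add: ldown_closure_def)
    show "(SUP x. inf (e k x) (D x)) \<le> e k s"
    proof (rule SUP_least)
      fix x
      have "inf (e k x) (D x) \<le> inf (e k x) (e x s)"
        using is_lsup_upper[OF O s] by (simp add: inf.coboundedI2)
      also have "\<dots> \<le> e k s" using O by (rule L_order_trans)
      finally show "inf (e k x) (D x) \<le> e k s" .
    qed
  qed
qed

lemma super_compact_principal:
  assumes O: "L_order e"
  shows "super_compact (sigma_L e) (e k)"
  unfolding super_compact_def
proof (intro conjI allI impI)
  show "lnonempty (e k)"
    unfolding lnonempty_def using SUP_upper[of k UNIV "e k"] by (simp add: L_order_refl[OF O] top_unique)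
  fix I assume I: "I \<subseteq> sigma_L e"
  then have "lupper e (Sup I)" and "\<forall>V\<in>I. lupper e V"
    using Sup_in_sigma_L by (auto simp: sigma_L_iff)
  then show "lsub (e k) (Sup I) = (SUP V\<in>I. lsub (e k) V)"
    by (simp add: lsub_principal[OF O])
qed

lemma sigma_L_eq_SUP_compact:
  assumes P: "algebraic_L_dcpo e" and A: "A \<in> sigma_L e"
  shows "A x = (SUP k\<in>{k. lcompact e k}. inf (A k) (e k x))"
proof -
  have O: "L_order e" using P by (intro L_dcpo_L_order algebraic_L_dcpo_L_dcpo)
  have "ldirected e (kset e x)" and "is_lsup e (kset e x) x"
    using P unfolding algebraic_L_dcpo_def by blast+
  then have "A x = A (lsup e (kset e x))" using lsup_eqI[OF O] by simp
  also have "\<dots> = (SUP y. inf (A y) (kset e x y))"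
    using A \<open>ldirected e (kset e x)\<close> unfolding sigma_L_iff by blast
  also have "\<dots> = (SUP k\<in>{k. lcompact e k}. inf (A k) (e k x))"
  proof (rule antisym; rule SUP_least)
    fix y
    show "inf (A y) (kset e x y) \<le> (SUP k\<in>{k. lcompact e k}. inf (A k) (e k x))"
      by (cases "lcompact e y") (auto simp: kset_def intro: SUP_upper2)
  next
    fix k assume "k \<in> {k. lcompact e k}"
    then have "inf (A k) (e k x) = inf (A k) (kset e x k)" by (simp add: kset_def)
    also have "\<dots> \<le> (SUP y. inf (A y) (kset e x y))" by (rule SUP_upper) simp
    finally show "inf (A k) (e k x) \<le> (SUP y. inf (A y) (kset e x y))" .
  qed
  finally show ?thesis .
qed

lemma is_L_base_compact_principals:
  assumes P: "algebraic_L_dcpo e"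
  shows "is_L_base (sigma_L e) (e ` {k. lcompact e k})"
  unfolding is_L_base_def
proof (intro conjI ballI)
  have "L_dcpo e" using P by (rule algebraic_L_dcpo_L_dcpo)
  then show "e ` {k. lcompact e k} \<subseteq> sigma_L e"
    using principal_compact_in_sigma_L by blast
  have O: "L_order e" using \<open>L_dcpo e\<close> by (rule L_dcpo_L_order)
  fix A assume A: "A \<in> sigma_L e"
  then have "lupper e A" by (simp add: sigma_L_iff)
  show "A = (SUP V\<in>e ` {k. lcompact e k}. (\<lambda>x. inf (lsub V A) (V x)))"
  proof
    fix x
    have "(SUP V\<in>e ` {k. lcompact e k}. (\<lambda>x. inf (lsub V A) (V x))) x
        = (SUP k\<in>{k. lcompact e k}. inf (lsub (e k) A) (e k x))"
      by (simp add: image_image)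
    also have "\<dots> = (SUP k\<in>{k. lcompact e k}. inf (A k) (e k x))"
      by (simp add: lsub_principal[OF O \<open>lupper e A\<close>])
    also have "\<dots> = A x"
      by (rule sigma_L_eq_SUP_compact[OF P A, symmetric])
    finally show "A x = (SUP V\<in>e ` {k. lcompact e k}. (\<lambda>x. inf (lsub V A) (V x))) x" ..
  qed
qed

end

theorem proposition5p6:
  fixes e :: "'a \<Rightarrow> 'a \<Rightarrow> 'l::complete_lattice"
  assumes "frame_law TYPE('l)"
    and "algebraic_L_dcpo e"
  shows "is_L_topology (sigma_L e) \<and> strong_locally_super_compact (sigma_L e)"
proof
  show "is_L_topology (sigma_L e)"
    using assms(1) by (rule is_L_topology_sigma_L)
  have "L_order e"
    using assms(2) by (intro L_dcpo_L_order algebraic_L_dcpo_L_dcpo)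
  then have "\<forall>V\<in>e ` {k. lcompact e k}. super_compact (sigma_L e) V"
    using super_compact_principal[OF assms(1)] by auto
  then show "strong_locally_super_compact (sigma_L e)"
    unfolding strong_locally_super_compact_def
    using is_L_base_compact_principals[OF assms] by blast
qed

end
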